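(* Let $N$ be an $r\times r$ indecomposable generalised Cartan matrix, and let $\mathfrak h$, $\alpha_i$, $Z$, $\mathcal A$, $F$, $v_1,\dots,v_r$ be as in the context. If Problem 2 has a solution, then $\ker F=Z$.
   Context: A generalised Cartan matrix is $N=[n(i,j)]_{1\le i,j\le r}$ with $n(i,j)\in\mathbb Z$, $n(i,i)=2$, $n(i,j)\le 0$ for $i\neq j$, and $n(i,j)=0\iff n(j,i)=0$; it is indecomposable if there is no partition of $\{1,\dots,r\}$ into two nonempty sets $I,J$ with $n(i,j)=0$ for all $i\in I,j\in J$. Let $s$ be the corank of $N$, $\mathfrak h$ the complex vector space with basis $H_1,\dots,H_{r+s}$, $\alpha_1,\dots,\alpha_r\in\mathfrak h^*$ linearly independent with $\alpha_j(H_i)=n(i,j)$ for $1\le i,j\le r$, and $Z=\bigcap_i\ker\alpha_i$. $\mathcal A$ is a complex commutative algebra, $\mathrm{Der}(\mathcal A)$ its Lie algebra of derivations; for $a\in\mathcal A$, $D\in\mathrm{Der}(\mathcal A)$, $aD$ is $b\mapsto aD(b)$. $F:\mathfrak h\to\mathrm{Der}(\mathcal A)$ is a Lie algebra homomorphism ($\mathfrak h$ abelian) and $v_1,\dots,v_r\in\mathcal A$ are invertible with $F(H)(v_i)=\alpha_i(H)v_i$ for all $H\in\mathfrak h$. Problem 2 has a solution means: there exist $\delta_1,\dots,\delta_r,\delta_{-1},\dots,\delta_{-r}\in\mathrm{Im}\,F$ such that, with $\mathbf X_i=v_i\delta_i$, $\mathbf X_{-i}=v_i^{-1}\delta_{-i}$,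 one has $[F(H_a),F(H_b)]=0$, $[\mathbf X_i,\mathbf X_{-i}]=F(H_i)$, $[\mathbf X_i,\mathbf X_{-j}]=0$ for $i\neq j$, and $[F(H_a),\mathbf X_{\pm j}]=\pm\alpha_j(H_a)\mathbf X_{\pm j}$. *)

theory Defs
  imports Complex_Main "Jordan_Normal_Form.DL_Rank"
begin

definition gen_cartan :: "nat \<Rightarrow> (nat \<Rightarrow> nat \<Rightarrow> int) \<Rightarrow> bool" where
  "gen_cartan r N \<longleftrightarrow>
     (\<forall>i<r. N i i = 2) \<and>
     (\<forall>i<r. \<forall>j<r. i \<noteq> j \<longrightarrow> N i j \<le> 0) \<and>
     (\<forall>i<r. \<forall>j<r. N i j = 0 \<longleftrightarrow> N j i = 0)"

definition indecomposable :: "nat \<Rightarrow> (nat \<Rightarrow> nat \<Rightarrow> int) \<Rightarrow> bool" where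
  "indecomposable r N \<longleftrightarrow>
     \<not> (\<exists>I J. I \<noteq> {} \<and> J \<noteq> {} \<and> I \<inter> J = {} \<and> I \<union> J = {..<r} \<and>
             (\<forall>i\<in>I. \<forall>j\<in>J. N i j = 0))"

definition cmat :: "nat \<Rightarrow> (nat \<Rightarrow> nat \<Rightarrow> int) \<Rightarrow> complex mat" where
  "cmat r N = mat r r (\<lambda>(i,j). of_int (N i j))"

definition corank :: "nat \<Rightarrow> (nat \<Rightarrow> nat \<Rightarrow> int) \<Rightarrow> nat" where
  "corank r N = r - vec_space.rank r (cmat r N)"

(* A complex commutative unital algebra: the ring structure is the type class
   comm_ring_1, the complex scalar multiplication is sc. *)
definition complex_comm_algebra :: "(complex \<Rightarrow> 'a::comm_ring_1 \<Rightarrow> 'a) \<Rightarrow> bool" where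
  "complex_comm_algebra sc \<longleftrightarrow>
     (\<forall>c a b. sc c (a + b) = sc c a + sc c b) \<and>
     (\<forall>c d a. sc (c + d) a = sc c a + sc d a) \<and>
     (\<forall>c d a. sc (c * d) a = sc c (sc d a)) \<and>
     (\<forall>a. sc 1 a = a) \<and>
     (\<forall>c a b. sc c (a * b) = sc c a * b)"

definition is_derivation :: "(complex \<Rightarrow> 'a::comm_ring_1 \<Rightarrow> 'a) \<Rightarrow> ('a \<Rightarrow> 'a) \<Rightarrow> bool" where
  "is_derivation sc D \<longleftrightarrow>
     (\<forall>a b. D (a + b) = D a + D b) \<and>
     (\<forall>c a. D (sc c a) = sc c (D a)) \<and>
     (\<forall>a b. D (a * b) = a * D b + D a * b)"

definition bracket :: "('a::ab_group_add \<Rightarrow> 'a) \<Rightarrow> ('a \<Rightarrow> 'a) \<Rightarrow> 'a \<Rightarrow> 'a" where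
  "bracket D E = (\<lambda>b. D (E b) - E (D b))"

definition lmult :: "'a::times \<Rightarrow> ('a \<Rightarrow> 'a) \<Rightarrow> 'a \<Rightarrow> 'a" where
  "lmult a D = (\<lambda>b. a * D b)"

(* The Cartan subalgebra h = C^(r+s), realised as coordinate vectors
   H :: nat \<Rightarrow> complex with H k = 0 for k \<ge> d (d = r + s).
   The basis element H_k (k < d) is the unit vector. *)
definition hspace :: "nat \<Rightarrow> (nat \<Rightarrow> complex) set" where
  "hspace d = {H. \<forall>k\<ge>d. H k = 0}"

definition hbasis :: "nat \<Rightarrow> nat \<Rightarrow> complex" where
  "hbasis k = (\<lambda>l. if l = k then 1 else 0)"

definition lin_fun :: "nat \<Rightarrow> (nat \<Rightarrow> complex) \<Rightarrow> (nat \<Rightarrow> complex) \<Rightarrow> complex" where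
  "lin_fun d a H = (\<Sum>k<d. H k * a k)"

(* a linear map F : h \<rightarrow> Der(A) which is a Lie algebra homomorphism (h abelian) *)
definition lie_hom_h :: "nat \<Rightarrow> (complex \<Rightarrow> 'a::comm_ring_1 \<Rightarrow> 'a)
     \<Rightarrow> ((nat \<Rightarrow> complex) \<Rightarrow> 'a \<Rightarrow> 'a) \<Rightarrow> bool" where
  "lie_hom_h d sc F \<longleftrightarrow>
     (\<forall>H\<in>hspace d. is_derivation sc (F H)) \<and>
     (\<forall>H\<in>hspace d. \<forall>H'\<in>hspace d. F (\<lambda>k. H k + H' k) = (\<lambda>b. F H b + F H' b)) \<and>
     (\<forall>c. \<forall>H\<in>hspace d. F (\<lambda>k. c * H k) = (\<lambda>b. sc c (F H b))) \<and>
     (\<forall>H\<in>hspace d. \<forall>H'\<in>hspace d. bracket (F H) (F H') = (\<lambda>b. 0))"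

end

theory Submission
  imports Defs
begin

(* Write delta_i = F(A_i) and delta_-i = F(B_i).  Since F(H) v_j = alpha_j(H) v_j with v_j
   invertible, F(H) determines alpha_j(H), and the relations of Problem 2 become statements
   in h: after rescaling to u_i = A_i / alpha_i(A_i) and w_i = alpha_i(A_i) B_i one
   gets alpha_i(u_i) = 1, alpha_i(w_i) = -1, F(H_i) = F(u_i - w_i), and, for i ~= j,
   F(alpha_j(u_i) w_j + alpha_i(w_j) u_i) = 0.  Evaluating alpha_i and alpha_j on the last
   element shows that alpha_j(u_i) is 0 or -1, and the pairs with alpha_j(u_i) = -1 form a
   partial injection P with N = 2I - P - P^T.  The quadratic form of such a matrix is a sum of
   squares; hence an indecomposable N has corank at most one, and corank one forces P to be a
   permutation, so that F(H_1 + ... + H_r) = sum F(u_i) - sum F(w_i) = 0.  As ker F is always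
   contained in Z, and Z has dimension corank N, this gives ker F = Z. *)

section \<open>Square matrices with trivial kernel\<close>

definition trivial_kernel :: "nat \<Rightarrow> nat \<Rightarrow> (nat \<Rightarrow> nat \<Rightarrow> 'a::comm_ring) \<Rightarrow> bool" where
  "trivial_kernel m n M \<longleftrightarrow> (\<forall>c. (\<forall>i<m. (\<Sum>j<n. M i j * c j) = 0) \<longrightarrow> (\<forall>j<n. c j = 0))"

lemma mat_mult_vec_nth:
  assumes "v \<in> carrier_vec n" "i < m"
  shows "(mat m n (\<lambda>(i, j). M i j) *\<^sub>v v) $ i = (\<Sum>j<n. M i j * v $ j)"
  using assms by (simp add: mult_mat_vec_def scalar_prod_def lessThan_atLeast0 mult.commute)

lemma det_mat_neq_0_iff:
  fixes M :: "nat \<Rightarrow> nat \<Rightarrow> 'a::idom"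
  shows "det (mat n n (\<lambda>(i, j). M i j)) \<noteq> 0 \<longleftrightarrow> trivial_kernel n n M"
proof -
  let ?M = "mat n n (\<lambda>(i, j). M i j)"
  have kernel_vec: "?M *\<^sub>v v = 0\<^sub>v n \<longleftrightarrow> (\<forall>i<n. (\<Sum>j<n. M i j * v $ j) = 0)"
    if "v \<in> carrier_vec n" for v
  proof -
    have "?M *\<^sub>v v = 0\<^sub>v n \<longleftrightarrow> (\<forall>i<n. (?M *\<^sub>v v) $ i = 0)"
      by (auto simp: vec_eq_iff)
    then show ?thesis using mat_mult_vec_nth[OF that] by (simp del: index_mult_mat_vec)
  qed
  have "det ?M = 0 \<longleftrightarrow> (\<exists>v\<in>carrier_vec n. v \<noteq> 0\<^sub>v n \<and> ?M *\<^sub>v v = 0\<^sub>v n)"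
    using det_0_iff_vec_prod_zero[of ?M n] by auto
  also have "\<dots> \<longleftrightarrow> \<not> trivial_kernel n n M"
  proof
    assume "\<exists>v\<in>carrier_vec n. v \<noteq> 0\<^sub>v n \<and> ?M *\<^sub>v v = 0\<^sub>v n"
    then obtain v where "v \<in> carrier_vec n" "v \<noteq> 0\<^sub>v n" "\<forall>i<n. (\<Sum>j<n. M i j * v $ j) = 0"
      using kernel_vec by blast
    then show "\<not> trivial_kernel n n M"
      unfolding trivial_kernel_def by (metis eq_vecI carrier_vecD index_zero_vec)
  next
    assume "\<not> trivial_kernel n n M"
    then obtain c j where c: "\<forall>i<n. (\<Sum>j<n. M i j * c j) = 0" "j < n" "c j \<noteq> 0"
      unfolding trivial_kernel_def by blast
    then show "\<exists>v\<in>carrier_vec n. v \<noteq> 0\<^sub>v n \<and> ?M *\<^sub>v v = 0\<^sub>v n"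
    proof (intro bexI conjI)
      show "vec n c \<noteq> 0\<^sub>v n" using \<open>j < n\<close> \<open>c j \<noteq> 0\<close> by (metis index_vec index_zero_vec(1))
      show "?M *\<^sub>v vec n c = 0\<^sub>v n" using kernel_vec[of "vec n c"] c by simp
    qed simp
  qed
  finally show ?thesis by blast
qed

lemma trivial_kernel_transpose:
  fixes M :: "nat \<Rightarrow> nat \<Rightarrow> 'a::idom"
  assumes "trivial_kernel n n (\<lambda>i j. M j i)"
  shows "trivial_kernel n n M"
proof -
  have "mat n n (\<lambda>(i, j). M j i) = transpose_mat (mat n n (\<lambda>(i, j). M i j))"
    by (auto simp: mat_eq_iff)
  moreover have "det (mat n n (\<lambda>(i, j). M j i)) \<noteq> 0"
    using assms det_mat_neq_0_iff[of n "\<lambda>i j. M j i"] by simp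
  ultimately show ?thesis
    using det_transpose[of "mat n n (\<lambda>(i, j). M i j)" n] det_mat_neq_0_iff[of n M] by simp
qed

lemma trivial_kernel_complex_of_real:
  fixes M :: "nat \<Rightarrow> nat \<Rightarrow> real"
  assumes "trivial_kernel m n M"
  shows "trivial_kernel m n (\<lambda>i j. complex_of_real (M i j))"
  unfolding trivial_kernel_def
proof (intro allI impI)
  fix c :: "nat \<Rightarrow> complex" and j
  assume c: "\<forall>i<m. (\<Sum>j<n. complex_of_real (M i j) * c j) = 0" and "j < n"
  have "\<forall>i<m. (\<Sum>j<n. M i j * Re (c j)) = 0" "\<forall>i<m. (\<Sum>j<n. M i j * Im (c j)) = 0"
    using arg_cong[where f = Re, OF c[rule_format]] arg_cong[where f = Im, OF c[rule_format]]
    by simp_all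
  then have "Re (c j) = 0" "Im (c j) = 0"
    using spec[OF assms[unfolded trivial_kernel_def], of "\<lambda>j. Re (c j)"]
      spec[OF assms[unfolded trivial_kernel_def], of "\<lambda>j. Im (c j)"] \<open>j < n\<close>
    by blast+
  then show "c j = 0" by (simp add: complex_eq_iff)
qed

lemma corank_neq_0_imp_nontrivial_kernel:
  assumes "corank r N \<noteq> 0"
  shows "\<not> trivial_kernel r r (\<lambda>i j. complex_of_int (N i j))"
proof -
  have "cmat r N \<in> carrier_mat r r" by (simp add: cmat_def)
  moreover have "vec_space.rank r (cmat r N) \<noteq> r" using assms by (simp add: corank_def)
  ultimately have "det (cmat r N) = 0" using vec_space.det_rank_iff by blast
  then show ?thesis using det_mat_neq_0_iff[of r "\<lambda>i j. complex_of_int (N i j)"]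
    by (simp add: cmat_def)
qed

lemma corank_le_1_if_trivial_kernel_plus_ones:
  assumes "trivial_kernel r r (\<lambda>i j. complex_of_int (N i j) + 1)"
  shows "corank r N \<le> 1"
proof -
  define J :: "complex mat" where "J = mat r r (\<lambda>_. 1)"
  have N: "cmat r N \<in> carrier_mat r r" and J: "J \<in> carrier_mat r r"
    by (simp_all add: cmat_def J_def)
  have "cmat r N + J = mat r r (\<lambda>(i, j). complex_of_int (N i j) + 1)"
    by (auto simp: cmat_def J_def)
  then have "det (cmat r N + J) \<noteq> 0" using assms by (simp add: det_mat_neq_0_iff)
  then have "vec_space.rank r (cmat r N + J) = r"
    using vec_space.det_rank_iff[of "cmat r N + J" r] N J by simp
  moreover have "vec_space.rank r (cmat r N + J) \<le> vec_space.rank r (cmat r N) + vec_space.rank r J"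
    using vec_space.rank_subadditive[OF N J] .
  moreover have "vec_space.rank r J \<le> 1"
    using vec_space.rank_le_1_product_entries[OF J, of "\<lambda>_. 1" "\<lambda>_. 1"] by (simp add: J_def)
  ultimately show ?thesis unfolding corank_def by linarith
qed

section \<open>Cartan matrices of type A\<close>

definition partial_injection :: "nat \<Rightarrow> (nat \<Rightarrow> nat \<Rightarrow> bool) \<Rightarrow> bool" where
  "partial_injection r P \<longleftrightarrow>
     (\<forall>i<r. \<forall>j<r. \<forall>k<r. P i j \<and> P i k \<longrightarrow> j = k) \<and>
     (\<forall>i<r. \<forall>j<r. \<forall>k<r. P i k \<and> P j k \<longrightarrow> i = j)"

(* N = 2I - P - P^T for the graph P of a partial injection; for irreflexive P these are the
   Cartan matrices of type A_n (P a path) and A_n^(1) (P a cycle), and their direct sums. *)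
definition type_A :: "nat \<Rightarrow> (nat \<Rightarrow> nat \<Rightarrow> bool) \<Rightarrow> (nat \<Rightarrow> nat \<Rightarrow> int) \<Rightarrow> bool" where
  "type_A r P N \<longleftrightarrow> partial_injection r P \<and>
     (\<forall>i<r. \<forall>j<r. N i j = (if i = j then 2 else 0) - of_bool (P i j) - of_bool (P j i))"

lemma sum_of_bool_at_most_one:
  fixes P :: "nat \<Rightarrow> bool"
  assumes "\<forall>j<r. \<forall>k<r. P j \<and> P k \<longrightarrow> j = k"
  shows "(\<Sum>j<r. of_bool (P j)) = (of_bool (\<exists>j<r. P j) :: 'a::semiring_1)"
proof (cases "\<exists>j<r. P j")
  case True
  then obtain j0 where "j0 < r" "P j0" by blast
  have "(\<Sum>j<r. of_bool (P j) :: 'a) = of_nat (card ({..<r} \<inter> {j. P j}))"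
    by (rule sum_of_bool_eq) simp_all
  also have "{..<r} \<inter> {j. P j} = {j0}" using assms \<open>j0 < r\<close> \<open>P j0\<close> by auto
  finally show ?thesis using True by simp
next
  case False
  then have "{..<r} \<inter> {j. P j} = {}" by auto
  with False show ?thesis by simp
qed

lemma type_A_quadratic_form_expand:
  fixes c :: "nat \<Rightarrow> real"
  assumes "type_A r P N"
  shows "(\<Sum>i<r. c i * (\<Sum>j<r. N i j * c j))
    = 2 * (\<Sum>i<r. (c i)\<^sup>2) - 2 * (\<Sum>i<r. \<Sum>j<r. of_bool (P i j) * (c i * c j))"
proof -
  define S where "S = (\<Sum>i<r. \<Sum>j<r. of_bool (P i j) * (c i * c j))"
  have N: "\<And>i j. i < r \<Longrightarrow> j < r \<Longrightarrow>
      N i j = (if i = j then 2 else 0) - of_bool (P i j) - of_bool (P j i)"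
    using assms unfolding type_A_def by blast
  have row: "c i * (\<Sum>j<r. N i j * c j)
      = 2 * (c i)\<^sup>2 - (\<Sum>j<r. of_bool (P i j) * (c i * c j)) - (\<Sum>j<r. of_bool (P j i) * (c j * c i))"
    if "i < r" for i
  proof -
    have "c i * (\<Sum>j<r. N i j * c j) = (\<Sum>j<r. (if i = j then 2 * (c i)\<^sup>2 else 0)
        - of_bool (P i j) * (c i * c j) - of_bool (P j i) * (c j * c i))"
      unfolding sum_distrib_left by (intro sum.cong refl) (auto simp: N that power2_eq_square)
    also have "\<dots> = 2 * (c i)\<^sup>2 - (\<Sum>j<r. of_bool (P i j) * (c i * c j))
        - (\<Sum>j<r. of_bool (P j i) * (c j * c i))"
      using that by (simp add: sum_subtractf)
    finally show ?thesis .
  qed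
  have "(\<Sum>i<r. c i * (\<Sum>j<r. N i j * c j)) = (\<Sum>i<r. 2 * (c i)\<^sup>2
      - (\<Sum>j<r. of_bool (P i j) * (c i * c j)) - (\<Sum>j<r. of_bool (P j i) * (c j * c i)))"
    using row by (intro sum.cong) auto
  also have "\<dots> = 2 * (\<Sum>i<r. (c i)\<^sup>2) - S - (\<Sum>i<r. \<Sum>j<r. of_bool (P j i) * (c j * c i))"
    unfolding S_def by (simp only: sum_subtractf sum_distrib_left)
  also have "(\<Sum>i<r. \<Sum>j<r. of_bool (P j i) * (c j * c i)) = S"
    unfolding S_def by (rule sum.swap)
  finally show ?thesis unfolding S_def by simp
qed

lemma partial_injection_sum_sq_diff:
  fixes c :: "nat \<Rightarrow> real"
  assumes "partial_injection r P"
  shows "(\<Sum>i<r. \<Sum>j<r. of_bool (P i j) * (c i - c j)\<^sup>2)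
    = (\<Sum>i<r. of_bool (\<exists>j<r. P i j) * (c i)\<^sup>2) + (\<Sum>j<r. of_bool (\<exists>i<r. P i j) * (c j)\<^sup>2)
      - 2 * (\<Sum>i<r. \<Sum>j<r. of_bool (P i j) * (c i * c j))"
proof -
  have "(\<Sum>i<r. \<Sum>j<r. of_bool (P i j) * (c i - c j)\<^sup>2) = (\<Sum>i<r. \<Sum>j<r.
      of_bool (P i j) * (c i)\<^sup>2 + of_bool (P i j) * (c j)\<^sup>2 - 2 * (of_bool (P i j) * (c i * c j)))"
    by (intro sum.cong refl) (simp add: power2_diff algebra_simps)
  also have "\<dots> = (\<Sum>i<r. \<Sum>j<r. of_bool (P i j) * (c i)\<^sup>2) + (\<Sum>i<r. \<Sum>j<r. of_bool (P i j) * (c j)\<^sup>2)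
      - 2 * (\<Sum>i<r. \<Sum>j<r. of_bool (P i j) * (c i * c j))"
    by (simp only: sum.distrib sum_subtractf sum_distrib_left)
  also have "(\<Sum>i<r. \<Sum>j<r. of_bool (P i j) * (c j)\<^sup>2) = (\<Sum>j<r. \<Sum>i<r. of_bool (P i j) * (c j)\<^sup>2)"
    by (rule sum.swap)
  also have "(\<Sum>i<r. \<Sum>j<r. of_bool (P i j) * (c i)\<^sup>2) = (\<Sum>i<r. of_bool (\<exists>j<r. P i j) * (c i)\<^sup>2)"
    using assms unfolding partial_injection_def
    by (simp add: sum_distrib_right[symmetric] sum_of_bool_at_most_one del: sum_of_bool_eq sum_of_bool_mult_eq)
  also have "(\<Sum>j<r. \<Sum>i<r. of_bool (P i j) * (c j)\<^sup>2) = (\<Sum>j<r. of_bool (\<exists>i<r. P i j) * (c j)\<^sup>2)"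
    using assms unfolding partial_injection_def
    by (simp add: sum_distrib_right[symmetric] sum_of_bool_at_most_one del: sum_of_bool_eq sum_of_bool_mult_eq)
  finally show ?thesis .
qed

lemma type_A_quadratic_form:
  fixes c :: "nat \<Rightarrow> real"
  assumes "type_A r P N"
  shows "(\<Sum>i<r. c i * (\<Sum>j<r. N i j * c j)) =
     (\<Sum>i<r. \<Sum>j<r. of_bool (P i j) * (c i - c j)\<^sup>2)
     + (\<Sum>i<r. of_bool (\<not> (\<exists>j<r. P i j)) * (c i)\<^sup>2)
     + (\<Sum>j<r. of_bool (\<not> (\<exists>i<r. P i j)) * (c j)\<^sup>2)"
proof -
  have split: "(\<Sum>i<r. of_bool (A i) * (c i)\<^sup>2) + (\<Sum>i<r. of_bool (\<not> A i) * (c i)\<^sup>2) = (\<Sum>i<r. (c i)\<^sup>2)"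
    for A :: "nat \<Rightarrow> bool"
    unfolding sum.distrib[symmetric] by (intro sum.cong) auto
  have "partial_injection r P" using assms unfolding type_A_def by blast
  then show ?thesis
    using type_A_quadratic_form_expand[OF assms, of c] partial_injection_sum_sq_diff[of r P c]
      split[of "\<lambda>i. \<exists>j<r. P i j"] split[of "\<lambda>j. \<exists>i<r. P i j"]
    by linarith
qed

lemma type_A_quadratic_form_nonneg:
  fixes c :: "nat \<Rightarrow> real"
  assumes "type_A r P N"
  shows "0 \<le> (\<Sum>i<r. c i * (\<Sum>j<r. N i j * c j))"
  unfolding type_A_quadratic_form[OF assms] by (intro add_nonneg_nonneg sum_nonneg) auto

lemma type_A_quadratic_form_eq_0D:
  fixes c :: "nat \<Rightarrow> real"
  assumes "type_A r P N" and "(\<Sum>i<r. c i * (\<Sum>j<r. N i j * c j)) = 0"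
  shows "\<And>i j. i < r \<Longrightarrow> j < r \<Longrightarrow> P i j \<Longrightarrow> c i = c j"
    and "\<And>j. j < r \<Longrightarrow> \<not> (\<exists>i<r. P i j) \<Longrightarrow> c j = 0"
proof -
  have nonneg: "0 \<le> (\<Sum>i<r. \<Sum>j<r. of_bool (P i j) * (c i - c j)\<^sup>2)"
      "0 \<le> (\<Sum>i<r. of_bool (\<not> (\<exists>j<r. P i j)) * (c i)\<^sup>2)"
      "0 \<le> (\<Sum>j<r. of_bool (\<not> (\<exists>i<r. P i j)) * (c j)\<^sup>2)"
    by (intro sum_nonneg; simp)+
  then have zero: "(\<Sum>i<r. \<Sum>j<r. of_bool (P i j) * (c i - c j)\<^sup>2) = 0"
      "(\<Sum>j<r. of_bool (\<not> (\<exists>i<r. P i j)) * (c j)\<^sup>2) = 0"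
    using assms(2) unfolding type_A_quadratic_form[OF assms(1)] by linarith+
  show "c i = c j" if "i < r" "j < r" "P i j" for i j
  proof -
    have "(\<Sum>j<r. of_bool (P i j) * (c i - c j)\<^sup>2) = 0"
      using zero(1) \<open>i < r\<close> by (simp add: sum_nonneg_eq_0_iff sum_nonneg del: sum_of_bool_mult_eq)
    then show ?thesis
      using that by (simp add: sum_nonneg_eq_0_iff del: sum_of_bool_mult_eq)
  qed
  show "c j = 0" if "j < r" "\<not> (\<exists>i<r. P i j)" for j
    using zero(2) that by (auto simp: sum_nonneg_eq_0_iff simp del: sum_of_bool_mult_eq)
qed

lemma indecomposable_imp_constant:
  assumes "indecomposable r N"
    and "\<And>i j. i < r \<Longrightarrow> j < r \<Longrightarrow> N i j \<noteq> 0 \<Longrightarrow> c i = c j"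
    and "i0 < r" "i < r"
  shows "c i = c i0"
proof (rule ccontr)
  assume "c i \<noteq> c i0"
  define I where "I = {k. k < r \<and> c k = c i0}"
  define J where "J = {k. k < r \<and> c k \<noteq> c i0}"
  have "I \<noteq> {}" "J \<noteq> {}" "I \<inter> J = {}" "I \<union> J = {..<r}"
    using \<open>i0 < r\<close> \<open>i < r\<close> \<open>c i \<noteq> c i0\<close> unfolding I_def J_def by auto
  moreover have "\<forall>k\<in>I. \<forall>l\<in>J. N k l = 0"
    using assms(2) unfolding I_def J_def by force
  ultimately show False
    using assms(1) unfolding indecomposable_def by blast
qed

lemma type_A_link_imp_constant:
  fixes c :: "nat \<Rightarrow> 'a"
  assumes "type_A r P N" "indecomposable r N"
    and "\<And>i j. i < r \<Longrightarrow> j < r \<Longrightarrow> P i j \<Longrightarrow> c i = c j"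
    and "i0 < r" "i < r"
  shows "c i = c i0"
proof (rule indecomposable_imp_constant[OF assms(2) _ assms(4,5)])
  fix k l assume "k < r" "l < r" "N k l \<noteq> 0"
  then have "k = l \<or> P k l \<or> P l k"
    using assms(1) unfolding type_A_def by (auto split: if_splits)
  then show "c k = c l" using assms(3) \<open>k < r\<close> \<open>l < r\<close> by metis
qed

lemma type_A_trivial_kernel_plus_ones:
  assumes "type_A r P N" "indecomposable r N"
  shows "trivial_kernel r r (\<lambda>i j. real_of_int (N i j) + 1)"
  unfolding trivial_kernel_def
proof (intro allI impI)
  fix c :: "nat \<Rightarrow> real" and j
  assume c: "\<forall>i<r. (\<Sum>j<r. (real_of_int (N i j) + 1) * c j) = 0" and "j < r"
  define s where "s = (\<Sum>j<r. c j)"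
  have Nc: "(\<Sum>j<r. N i j * c j) = - s" if "i < r" for i
    using c that unfolding s_def by (simp add: distrib_right sum.distrib eq_neg_iff_add_eq_0)
  have Q: "(\<Sum>i<r. c i * (\<Sum>j<r. N i j * c j)) = - s\<^sup>2"
    by (simp add: Nc s_def power2_eq_square sum_distrib_right sum_negf)
  then have "s\<^sup>2 \<le> 0"
    using type_A_quadratic_form_nonneg[OF assms(1), of c] by linarith
  then have "s = 0" by simp
  then have Q0: "(\<Sum>i<r. c i * (\<Sum>j<r. N i j * c j)) = 0" using Q by simp
  have "c i = c j" if "i < r" for i
    by (rule type_A_link_imp_constant[OF assms type_A_quadratic_form_eq_0D(1)[OF assms(1) Q0]
          \<open>j < r\<close> that])
  then have "s = (\<Sum>i<r. c j)" unfolding s_def by (intro sum.cong refl) blast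
  then show "c j = 0" using \<open>s = 0\<close> \<open>j < r\<close> by simp
qed

lemma type_A_nontrivial_kernel_imp_surjective:
  assumes "type_A r P N" "indecomposable r N"
    and "\<not> trivial_kernel r r (\<lambda>i j. real_of_int (N i j))"
  shows "\<forall>j<r. \<exists>i<r. P i j"
proof -
  obtain c :: "nat \<Rightarrow> real" and j0 where c: "\<forall>i<r. (\<Sum>j<r. N i j * c j) = 0" and "j0 < r" "c j0 \<noteq> 0"
    using assms(3) unfolding trivial_kernel_def by blast
  then have Q: "(\<Sum>i<r. c i * (\<Sum>j<r. N i j * c j)) = 0" by simp
  show ?thesis
  proof (intro allI impI)
    fix j assume "j < r"
    have "c j = c j0"
      by (rule type_A_link_imp_constant[OF assms(1,2) type_A_quadratic_form_eq_0D(1)[OF assms(1) Q]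
            \<open>j0 < r\<close> \<open>j < r\<close>])
    then show "\<exists>i<r. P i j"
      using type_A_quadratic_form_eq_0D(2)[OF assms(1) Q \<open>j < r\<close>] \<open>c j0 \<noteq> 0\<close> by auto
  qed
qed

lemma type_A_corank_le_1:
  assumes "type_A r P N" "indecomposable r N"
  shows "corank r N \<le> 1"
  using corank_le_1_if_trivial_kernel_plus_ones
    trivial_kernel_complex_of_real[OF type_A_trivial_kernel_plus_ones[OF assms]]
  by simp

lemma type_A_corank_neq_0_imp_surjective:
  assumes "type_A r P N" "indecomposable r N" "corank r N \<noteq> 0"
  shows "\<forall>j<r. \<exists>i<r. P i j"
  using type_A_nontrivial_kernel_imp_surjective[OF assms(1,2)]
    trivial_kernel_complex_of_real[of r r "\<lambda>i j. real_of_int (N i j)"] corank_neq_0_imp_nontrivial_kernel[OF assms(3)]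
  by auto

section \<open>Linear forms on h\<close>

lemma hspace_lincomb: "X \<in> hspace d \<Longrightarrow> Y \<in> hspace d \<Longrightarrow> (\<lambda>k. c * X k + c' * Y k) \<in> hspace d"
  and hspace_scale: "X \<in> hspace d \<Longrightarrow> (\<lambda>k. c * X k) \<in> hspace d"
  and hspace_diff: "X \<in> hspace d \<Longrightarrow> Y \<in> hspace d \<Longrightarrow> (\<lambda>k. X k - Y k) \<in> hspace d"
  and hspace_sum: "\<forall>i\<in>I. Xs i \<in> hspace d \<Longrightarrow> (\<lambda>k. \<Sum>i\<in>I. Xs i k) \<in> hspace d"
  and hspace_zero: "(\<lambda>k. 0) \<in> hspace d"
  and hbasis_in_hspace: "i < d \<Longrightarrow> hbasis i \<in> hspace d"
  by (simp_all add: hspace_def hbasis_def)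

lemma lin_fun_lincomb: "lin_fun d a (\<lambda>k. c * X k + c' * Y k) = c * lin_fun d a X + c' * lin_fun d a Y"
  and lin_fun_scale: "lin_fun d a (\<lambda>k. c * X k) = c * lin_fun d a X"
  and lin_fun_diff: "lin_fun d a (\<lambda>k. X k - Y k) = lin_fun d a X - lin_fun d a Y"
  and lin_fun_zero: "lin_fun d a (\<lambda>k. 0) = 0"
  by (simp_all add: lin_fun_def algebra_simps sum.distrib sum_subtractf sum_distrib_left)

lemma trivial_kernel_if_functionals_independent:
  assumes "\<forall>c. (\<forall>H\<in>hspace d. (\<Sum>j<r. c j * lin_fun d (acoef j) H) = 0) \<longrightarrow> (\<forall>j<r. c j = 0)"
  shows "trivial_kernel d r (\<lambda>l j. acoef j l)"
  unfolding trivial_kernel_def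
proof (intro allI impI)
  fix c :: "nat \<Rightarrow> complex" and j
  assume c: "\<forall>l<d. (\<Sum>j<r. acoef j l * c j) = 0" and "j < r"
  have "(\<Sum>j<r. c j * lin_fun d (acoef j) H) = 0" for H
  proof -
    have "(\<Sum>j<r. c j * lin_fun d (acoef j) H) = (\<Sum>l<d. H l * (\<Sum>j<r. acoef j l * c j))"
      unfolding lin_fun_def sum_distrib_left by (subst sum.swap) (simp add: algebra_simps)
    also have "\<dots> = 0" using c by simp
    finally show ?thesis .
  qed
  then show "c j = 0" using assms \<open>j < r\<close> by blast
qed

lemma zero_set_trivial:
  assumes "trivial_kernel r r (\<lambda>l j. acoef j l)"
    and "H \<in> hspace r" "\<forall>i<r. lin_fun r (acoef i) H = 0"
  shows "H = (\<lambda>k. 0)"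
proof
  fix k
  have "trivial_kernel r r acoef" using trivial_kernel_transpose assms(1) by blast
  moreover have "\<forall>i<r. (\<Sum>l<r. acoef i l * H l) = 0"
    using assms(3) unfolding lin_fun_def by (simp add: mult.commute)
  ultimately have "\<forall>l<r. H l = 0" unfolding trivial_kernel_def by blast
  then show "H k = 0" using assms(2) unfolding hspace_def by (cases "k < r") auto
qed

lemma trivial_kernel_adjoin_coordinate:
  assumes indep: "trivial_kernel (Suc r) r (\<lambda>l j. acoef j l)"
    and z: "\<forall>i<r. lin_fun (Suc r) (acoef i) z = 0" "l0 < Suc r" "z l0 \<noteq> 0"
  shows "trivial_kernel (Suc r) (Suc r) (\<lambda>l j. if j < r then acoef j l else of_bool (l = l0))"
  unfolding trivial_kernel_def
proof (intro allI impI)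
  fix c :: "nat \<Rightarrow> complex" and j
  assume "\<forall>l<Suc r. (\<Sum>j<Suc r. (if j < r then acoef j l else of_bool (l = l0)) * c j) = 0"
    and "j < Suc r"
  then have c: "(\<Sum>j<r. acoef j l * c j) + of_bool (l = l0) * c r = 0" if "l < Suc r" for l
    using that by simp
  \<comment> \<open>pair with z, on which the roots vanish\<close>
  have "0 = (\<Sum>l<Suc r. z l * ((\<Sum>j<r. acoef j l * c j) + of_bool (l = l0) * c r))"
    using c by simp
  also have "\<dots> = (\<Sum>l<Suc r. z l * (\<Sum>j<r. acoef j l * c j)) + (\<Sum>l<Suc r. z l * (of_bool (l = l0) * c r))"
    by (simp only: distrib_left sum.distrib)
  also have "(\<Sum>l<Suc r. z l * (\<Sum>j<r. acoef j l * c j)) = (\<Sum>j<r. c j * lin_fun (Suc r) (acoef j) z)"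
    unfolding lin_fun_def sum_distrib_left by (subst sum.swap) (simp add: algebra_simps)
  also have "\<dots> = 0" using z(1) by simp
  also have "(\<Sum>l<Suc r. z l * (of_bool (l = l0) * c r)) = (\<Sum>l<Suc r. if l = l0 then z l0 * c r else 0)"
    by (rule sum.cong) auto
  also have "\<dots> = z l0 * c r"
    using \<open>l0 < Suc r\<close> by (simp only: sum.delta[OF finite_lessThan]) simp
  finally have "c r = 0" using \<open>z l0 \<noteq> 0\<close> by simp
  then have "\<forall>l<Suc r. (\<Sum>j<r. acoef j l * c j) = 0" using c by simp
  then have "\<forall>j<r. c j = 0" using indep unfolding trivial_kernel_def by blast
  with \<open>c r = 0\<close> \<open>j < Suc r\<close> show "c j = 0" by (cases "j = r") auto
qed

lemma zero_set_line:
  assumes indep: "trivial_kernel (Suc r) r (\<lambda>l j. acoef j l)"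
    and z: "z \<in> hspace (Suc r)" "\<forall>i<r. lin_fun (Suc r) (acoef i) z = 0" "l0 < Suc r" "z l0 \<noteq> 0"
    and H: "H \<in> hspace (Suc r)" "\<forall>i<r. lin_fun (Suc r) (acoef i) H = 0"
  shows "H = (\<lambda>k. (H l0 / z l0) * z k)"
proof -
  define f where "f j l = (if j < r then acoef j l else of_bool (l = l0))" for j l
  have indep_f: "trivial_kernel (Suc r) (Suc r) f"
    by (rule trivial_kernel_transpose) (use trivial_kernel_adjoin_coordinate[OF indep z(2-4)] in \<open>simp add: f_def\<close>)
  define x where "x k = H k - (H l0 / z l0) * z k" for k
  have "\<forall>j<Suc r. (\<Sum>l<Suc r. f j l * x l) = 0"
  proof (intro allI impI)
    fix j assume "j < Suc r"
    show "(\<Sum>l<Suc r. f j l * x l) = 0"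
    proof (cases "j < r")
      case True
      then have "(\<Sum>l<Suc r. f j l * x l)
          = (\<Sum>l<Suc r. H l * acoef j l - H l0 / z l0 * (z l * acoef j l))"
        by (intro sum.cong) (simp_all add: f_def x_def algebra_simps)
      also have "\<dots> = lin_fun (Suc r) (acoef j) H - H l0 / z l0 * lin_fun (Suc r) (acoef j) z"
        unfolding lin_fun_def by (simp only: sum_subtractf sum_distrib_left)
      finally show ?thesis using H(2) z(2) True by simp
    next
      case False
      then show ?thesis using \<open>l0 < Suc r\<close> \<open>z l0 \<noteq> 0\<close> by (simp add: f_def x_def)
    qed
  qed
  then have "\<forall>l<Suc r. x l = 0" using indep_f unfolding trivial_kernel_def by blast
  show ?thesis
  proof
    fix k
    show "H k = H l0 / z l0 * z k"
    proof (cases "k < Suc r")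
      case True
      then show ?thesis using \<open>\<forall>l<Suc r. x l = 0\<close> unfolding x_def by simp
    next
      case False
      then show ?thesis using H(1) z(1) unfolding hspace_def by simp
    qed
  qed
qed

section \<open>Actions of h by derivations with weight vectors\<close>

locale weight_action =
  fixes d r :: nat and acoef :: "nat \<Rightarrow> nat \<Rightarrow> complex"
    and sc :: "complex \<Rightarrow> 'a::comm_ring_1 \<Rightarrow> 'a"
    and F :: "(nat \<Rightarrow> complex) \<Rightarrow> 'a \<Rightarrow> 'a"
    and v vinv :: "nat \<Rightarrow> 'a"
  assumes r_le_d: "r \<le> d"
    and comm_algebra: "complex_comm_algebra sc"
    and F_hom: "lie_hom_h d sc F"
    and v_vinv: "\<forall>i<r. v i * vinv i = 1"
    and weight_v: "\<forall>H\<in>hspace d. \<forall>i<r. F H (v i) = sc (lin_fun d (acoef i) H) (v i)"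
begin

abbreviation \<alpha> :: "nat \<Rightarrow> (nat \<Rightarrow> complex) \<Rightarrow> complex" where
  "\<alpha> j \<equiv> lin_fun d (acoef j)"

definition \<iota> :: "complex \<Rightarrow> 'a" where
  "\<iota> c = sc c 1"

lemma sc_eq_mult: "sc c a = \<iota> c * a"
  using comm_algebra unfolding complex_comm_algebra_def \<iota>_def by (metis mult_1)

lemma \<iota>_add: "\<iota> (c + c') = \<iota> c + \<iota> c'"
  and \<iota>_mult: "\<iota> (c * c') = \<iota> c * \<iota> c'"
  and \<iota>_1: "\<iota> 1 = 1"
  using comm_algebra unfolding complex_comm_algebra_def \<iota>_def
  by (auto simp: sc_eq_mult[of c "sc c' 1", unfolded \<iota>_def])

lemma \<iota>_0: "\<iota> 0 = 0"
  using \<iota>_add[of 0 0] by simp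

lemma \<iota>_minus: "\<iota> (- c) = - \<iota> c"
  using \<iota>_add[of c "- c"] \<iota>_0 minus_unique[of "\<iota> c" "\<iota> (- c)"] by simp

lemma \<iota>_inj: "\<iota> c = \<iota> c' \<Longrightarrow> c = c'"
proof (rule ccontr)
  assume "\<iota> c = \<iota> c'" "c \<noteq> c'"
  then have "\<iota> (c - c') = 0" using \<iota>_add[of c "- c'"] \<iota>_minus by simp
  then have "\<iota> (inverse (c - c') * (c - c')) = 0" by (simp add: \<iota>_mult)
  with \<open>c \<noteq> c'\<close> show False by (simp add: \<iota>_1)
qed

lemma F_v: "H \<in> hspace d \<Longrightarrow> i < r \<Longrightarrow> F H (v i) = \<iota> (\<alpha> i H) * v i"
  using weight_v by (simp add: sc_eq_mult)

lemma F_add: "X \<in> hspace d \<Longrightarrow> Y \<in> hspace d \<Longrightarrow> F (\<lambda>k. X k + Y k) b = F X b + F Y b"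
proof -
  assume "X \<in> hspace d" "Y \<in> hspace d"
  then have "F (\<lambda>k. X k + Y k) = (\<lambda>b. F X b + F Y b)"
    using F_hom unfolding lie_hom_h_def by blast
  then show ?thesis by simp
qed

lemma F_scale: "X \<in> hspace d \<Longrightarrow> F (\<lambda>k. c * X k) b = \<iota> c * F X b"
proof -
  assume "X \<in> hspace d"
  then have "F (\<lambda>k. c * X k) = (\<lambda>b. sc c (F X b))"
    using F_hom unfolding lie_hom_h_def by blast
  then show ?thesis by (simp add: sc_eq_mult)
qed

lemma F_lincomb:
  "X \<in> hspace d \<Longrightarrow> Y \<in> hspace d \<Longrightarrow> F (\<lambda>k. c * X k + c' * Y k) b = \<iota> c * F X b + \<iota> c' * F Y b"
  using F_add[OF hspace_scale hspace_scale] F_scale by simp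

lemma F_zero: "F (\<lambda>k. 0) b = 0"
  using F_scale[OF hspace_zero, of 0] by (simp add: \<iota>_0)

lemma F_diff: "X \<in> hspace d \<Longrightarrow> Y \<in> hspace d \<Longrightarrow> F (\<lambda>k. X k - Y k) b = F X b - F Y b"
  using F_lincomb[of X Y 1 "- 1"] by (simp add: \<iota>_1 \<iota>_minus)

lemma F_sum:
  assumes "finite I" "\<forall>i\<in>I. X i \<in> hspace d"
  shows "F (\<lambda>k. \<Sum>i\<in>I. X i k) b = (\<Sum>i\<in>I. F (X i) b)"
  using assms
proof (induction I rule: finite_induct)
  case empty
  then show ?case using F_zero by simp
next
  case (insert i I)
  have "F (\<lambda>k. \<Sum>i\<in>insert i I. X i k) b = F (\<lambda>k. X i k + (\<Sum>i\<in>I. X i k)) b"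
    using insert.hyps by simp
  also have "\<dots> = F (X i) b + F (\<lambda>k. \<Sum>i\<in>I. X i k) b"
    using insert.prems hspace_sum[of I X d] by (simp add: F_add)
  finally show ?case using insert by simp
qed

lemma F_mult: "X \<in> hspace d \<Longrightarrow> F X (a * b) = a * F X b + F X a * b"
  using F_hom unfolding lie_hom_h_def is_derivation_def by blast

lemma F_commute: "X \<in> hspace d \<Longrightarrow> Y \<in> hspace d \<Longrightarrow> F X (F Y b) = F Y (F X b)"
proof -
  assume "X \<in> hspace d" "Y \<in> hspace d"
  then have "bracket (F X) (F Y) b = 0"
    using F_hom unfolding lie_hom_h_def by simp
  then show ?thesis unfolding bracket_def by simp
qed

lemma F_vinv: "X \<in> hspace d \<Longrightarrow> i < r \<Longrightarrow> F X (vinv i) = - \<iota> (\<alpha> i X) * vinv i"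
proof -
  assume X: "X \<in> hspace d" and i: "i < r"
  have "F X 1 = 0" using F_mult[OF X, of 1 1] by simp
  moreover have "F X (v i * vinv i) = v i * F X (vinv i) + \<iota> (\<alpha> i X) * (v i * vinv i)"
    by (simp add: F_mult[OF X] F_v[OF X i] mult.assoc)
  ultimately have "v i * F X (vinv i) + \<iota> (\<alpha> i X) = 0"
    using v_vinv i by simp
  then have "vinv i * (v i * F X (vinv i)) = - \<iota> (\<alpha> i X) * vinv i"
    by (simp add: eq_neg_iff_add_eq_0[symmetric] mult.commute)
  then show ?thesis using v_vinv i by (simp add: mult.assoc[symmetric] mult.commute[of "vinv i"])
qed

lemma root_eq_if_F_eq:
  assumes "X \<in> hspace d" "Y \<in> hspace d" "F X = F Y" "j < r"
  shows "\<alpha> j X = \<alpha> j Y"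
proof -
  have "\<iota> (\<alpha> j X) * v j = \<iota> (\<alpha> j Y) * v j"
    using F_v[of X j] F_v[of Y j] assms by simp
  then have "\<iota> (\<alpha> j X) * (v j * vinv j) = \<iota> (\<alpha> j Y) * (v j * vinv j)"
    by (simp only: mult.assoc[symmetric])
  then show ?thesis using v_vinv \<open>j < r\<close> \<iota>_inj by simp
qed

lemma bracket_lmult_F:
  assumes X: "X \<in> hspace d" and Y: "Y \<in> hspace d" and "i < r" "j < r"
  shows "bracket (lmult (v i) (F X)) (lmult (vinv j) (F Y))
       = (\<lambda>b. v i * vinv j * F (\<lambda>k. (- \<alpha> j X) * Y k + (- \<alpha> i Y) * X k) b)"
proof
  fix b
  have "bracket (lmult (v i) (F X)) (lmult (vinv j) (F Y)) b
      = v i * (vinv j * F X (F Y b) + F X (vinv j) * F Y b) - vinv j * (v i * F Y (F X b) + F Y (v i) * F X b)"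
    unfolding bracket_def lmult_def using F_mult[OF X] F_mult[OF Y] by simp
  also have "\<dots> = v i * vinv j * (\<iota> (- \<alpha> j X) * F Y b + \<iota> (- \<alpha> i Y) * F X b)"
    using F_commute[OF X Y, of b] F_vinv[OF X \<open>j < r\<close>] F_v[OF Y \<open>i < r\<close>]
    by (simp add: \<iota>_minus algebra_simps)
  also have "\<dots> = v i * vinv j * F (\<lambda>k. (- \<alpha> j X) * Y k + (- \<alpha> i Y) * X k) b"
    by (simp only: F_lincomb[OF Y X])
  finally show "bracket (lmult (v i) (F X)) (lmult (vinv j) (F Y)) b = \<dots>" .
qed

lemma F_eq_if_bracket_diag:
  assumes "X \<in> hspace d" "Y \<in> hspace d" "i < r"
    and "bracket (lmult (v i) (F X)) (lmult (vinv i) (F Y)) = F H"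
  shows "F H = F (\<lambda>k. (- \<alpha> i X) * Y k + (- \<alpha> i Y) * X k)"
proof -
  have "F H = (\<lambda>b. v i * vinv i * F (\<lambda>k. (- \<alpha> i X) * Y k + (- \<alpha> i Y) * X k) b)"
    using bracket_lmult_F[OF assms(1-3,3)] assms(4) by simp
  then show ?thesis using v_vinv \<open>i < r\<close> by simp
qed

lemma F_eq_0_if_bracket_off_diag:
  assumes "X \<in> hspace d" "Y \<in> hspace d" "i < r" "j < r"
    and "bracket (lmult (v i) (F X)) (lmult (vinv j) (F Y)) = (\<lambda>b. 0)"
  shows "F (\<lambda>k. (- \<alpha> j X) * Y k + (- \<alpha> i Y) * X k) = (\<lambda>b. 0)"
proof
  fix b
  let ?Z = "\<lambda>k. (- \<alpha> j X) * Y k + (- \<alpha> i Y) * X k"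
  have "v i * vinv j * F ?Z b = 0"
    using fun_cong[OF assms(5), of b] bracket_lmult_F[OF assms(1-4)] by simp
  moreover have "(v i * vinv i) * (v j * vinv j) * F ?Z b = (vinv i * v j) * (v i * vinv j * F ?Z b)"
    by (simp add: algebra_simps)
  ultimately have "(v i * vinv i) * (v j * vinv j) * F ?Z b = 0" by simp
  then show "F ?Z b = 0" using v_vinv assms(3,4) by simp
qed

lemma rescale_diag_bracket:
  assumes X: "X \<in> hspace d" and Y: "Y \<in> hspace d" and "i < r" "\<alpha> i (hbasis i) = 2"
    and "bracket (lmult (v i) (F X)) (lmult (vinv i) (F Y)) = F (hbasis i)"
  shows "\<alpha> i X * \<alpha> i Y = - 1"
    and "F (hbasis i) = F (\<lambda>k. inverse (\<alpha> i X) * X k - \<alpha> i X * Y k)"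
proof -
  have F_hbasis: "F (hbasis i) = F (\<lambda>k. (- \<alpha> i X) * Y k + (- \<alpha> i Y) * X k)"
    using F_eq_if_bracket_diag[OF X Y \<open>i < r\<close>] assms(5) by blast
  have "hbasis i \<in> hspace d" using r_le_d \<open>i < r\<close> by (simp add: hbasis_in_hspace)
  then have "\<alpha> i (hbasis i) = \<alpha> i (\<lambda>k. (- \<alpha> i X) * Y k + (- \<alpha> i Y) * X k)"
    using root_eq_if_F_eq[OF _ hspace_lincomb[OF Y X] F_hbasis \<open>i < r\<close>] by simp
  also have "\<dots> = - 2 * (\<alpha> i X * \<alpha> i Y)"
    unfolding lin_fun_lincomb by simp
  finally have "- 2 * (\<alpha> i X * \<alpha> i Y) = - 2 * (- 1)" using assms(4) by simp
  then show XY: "\<alpha> i X * \<alpha> i Y = - 1" by (simp only: mult_cancel_left) simp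
  then have "inverse (\<alpha> i X) = - \<alpha> i Y" using inverse_unique[of "\<alpha> i X" "- \<alpha> i Y"] by simp
  then have "(\<lambda>k. (- \<alpha> i X) * Y k + (- \<alpha> i Y) * X k) = (\<lambda>k. inverse (\<alpha> i X) * X k - \<alpha> i X * Y k)"
    by (simp add: fun_eq_iff algebra_simps)
  with F_hbasis show "F (hbasis i) = F (\<lambda>k. inverse (\<alpha> i X) * X k - \<alpha> i X * Y k)" by simp
qed

lemma rescale_off_diag_bracket:
  assumes X: "X \<in> hspace d" and Y: "Y \<in> hspace d" and "i < r" "j < r" "p \<noteq> 0"
    and "bracket (lmult (v i) (F X)) (lmult (vinv j) (F Y)) = (\<lambda>b. 0)"
  shows "F (\<lambda>k. \<alpha> j (\<lambda>k. inverse p * X k) * (q * Y k) + \<alpha> i (\<lambda>k. q * Y k) * (inverse p * X k))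
    = (\<lambda>b. 0)"
proof -
  let ?D = "\<lambda>k. (- \<alpha> j X) * Y k + (- \<alpha> i Y) * X k"
  have "F ?D = (\<lambda>b. 0)" by (rule F_eq_0_if_bracket_off_diag[OF X Y assms(3,4,6)])
  then have F_scaled: "F (\<lambda>k. c * ?D k) = (\<lambda>b. 0)" for c
    using F_scale[OF hspace_lincomb[OF Y X, of "- \<alpha> j X" "- \<alpha> i Y"], of c]
    by (simp add: fun_eq_iff)
  have "(\<lambda>k. \<alpha> j (\<lambda>k. inverse p * X k) * (q * Y k) + \<alpha> i (\<lambda>k. q * Y k) * (inverse p * X k))
      = (\<lambda>k. (- (q / p)) * ?D k)"
    unfolding lin_fun_scale using \<open>p \<noteq> 0\<close> by (simp add: fun_eq_iff field_simps)
  then show ?thesis by (simp only: F_scaled)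
qed

lemma kernel_subset_zero_set: "{H \<in> hspace d. F H = (\<lambda>b. 0)} \<subseteq> {H \<in> hspace d. \<forall>i<r. \<alpha> i H = 0}"
proof safe
  fix H i assume "H \<in> hspace d" "F H = (\<lambda>b. 0)" "i < r"
  then have "\<alpha> i H = \<alpha> i (\<lambda>k. 0)"
    using root_eq_if_F_eq[OF _ hspace_zero] F_zero by (simp add: fun_eq_iff)
  then show "\<alpha> i H = 0" by (simp add: lin_fun_zero)
qed

lemma zero_set_subset_kernel_if_square:
  assumes "d = r" "trivial_kernel d r (\<lambda>l j. acoef j l)"
  shows "{H \<in> hspace d. \<forall>i<r. \<alpha> i H = 0} \<subseteq> {H \<in> hspace d. F H = (\<lambda>b. 0)}"
proof safe
  fix H assume "H \<in> hspace d" "\<forall>i<r. \<alpha> i H = 0"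
  then have "H = (\<lambda>k. 0)" using zero_set_trivial[of r acoef H] assms by simp
  then show "F H = (\<lambda>b. 0)" by (intro ext) (simp add: F_zero)
qed

lemma zero_set_subset_kernel_if_line:
  assumes "d = Suc r" "trivial_kernel d r (\<lambda>l j. acoef j l)"
    and "z \<in> hspace d" "F z = (\<lambda>b. 0)" "l0 < d" "z l0 \<noteq> 0"
  shows "{H \<in> hspace d. \<forall>i<r. \<alpha> i H = 0} \<subseteq> {H \<in> hspace d. F H = (\<lambda>b. 0)}"
proof safe
  fix H assume H: "H \<in> hspace d" "\<forall>i<r. \<alpha> i H = 0"
  have "\<forall>i<r. \<alpha> i z = 0" using kernel_subset_zero_set assms(3,4) by blast
  define c where "c = H l0 / z l0"
  have "H = (\<lambda>k. c * z k)"
    unfolding c_def by (rule zero_set_line[of r acoef]) (use assms H \<open>\<forall>i<r. \<alpha> i z = 0\<close> in simp_all)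
  then show "F H = (\<lambda>b. 0)"
    by (intro ext) (simp add: F_scale[OF \<open>z \<in> hspace d\<close>] \<open>F z = (\<lambda>b. 0)\<close>)
qed

end

section \<open>Normalised solutions of Problem 2\<close>

(* u i and w i are rescaled preimages of delta_i and delta_-i, see problem2_normalise; the
   assumptions F_hbasis and F_cross are the relations [X_i, X_-j] of Problem 2. *)
locale normalised_solution = weight_action +
  fixes u w :: "nat \<Rightarrow> nat \<Rightarrow> complex"
  assumes u_mem: "i < r \<Longrightarrow> u i \<in> hspace d"
    and w_mem: "i < r \<Longrightarrow> w i \<in> hspace d"
    and root_u: "i < r \<Longrightarrow> lin_fun d (acoef i) (u i) = 1"
    and root_w: "i < r \<Longrightarrow> lin_fun d (acoef i) (w i) = - 1"
    and F_hbasis: "i < r \<Longrightarrow> F (hbasis i) = F (\<lambda>k. u i k - w i k)"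
    and F_cross: "i < r \<Longrightarrow> j < r \<Longrightarrow> i \<noteq> j \<Longrightarrow>
      F (\<lambda>k. lin_fun d (acoef j) (u i) * w j k + lin_fun d (acoef i) (w j) * u i k) = (\<lambda>b. 0)"
begin

definition linked :: "nat \<Rightarrow> nat \<Rightarrow> bool" where
  "linked i j \<longleftrightarrow> i < r \<and> j < r \<and> i \<noteq> j \<and> \<alpha> j (u i) = - 1"

lemma off_diag_cases:
  assumes "i < r" "j < r" "i \<noteq> j"
  shows "\<alpha> j (u i) = 0 \<and> \<alpha> i (w j) = 0 \<or> \<alpha> j (u i) = - 1 \<and> \<alpha> i (w j) = 1 \<and> F (u i) = F (w j)"
proof -
  define G where "G = (\<lambda>k. \<alpha> j (u i) * w j k + \<alpha> i (w j) * u i k)"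
  have G: "G \<in> hspace d" unfolding G_def using u_mem w_mem assms by (simp add: hspace_lincomb)
  have FG: "F G = F (\<lambda>k. 0)" using F_cross[OF assms] by (simp add: G_def fun_eq_iff F_zero)
  have "\<alpha> i G = 0" "\<alpha> j G = 0"
    using root_eq_if_F_eq[OF G hspace_zero FG] assms by (simp_all add: lin_fun_zero)
  moreover have "\<alpha> i G = \<alpha> j (u i) * \<alpha> i (w j) + \<alpha> i (w j)" "\<alpha> j G = - \<alpha> j (u i) + \<alpha> i (w j) * \<alpha> j (u i)"
    unfolding G_def lin_fun_lincomb using root_u[OF \<open>i < r\<close>] root_w[OF \<open>j < r\<close>] by simp_all
  ultimately have e1: "(\<alpha> j (u i) + 1) * \<alpha> i (w j) = 0" and e2: "\<alpha> j (u i) * (\<alpha> i (w j) - 1) = 0"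
    by (simp_all add: algebra_simps)
  show ?thesis
  proof (cases "\<alpha> i (w j) = 0")
    case True
    with e2 show ?thesis by simp
  next
    case False
    with e1 have m: "\<alpha> j (u i) = - 1" by (simp add: add_eq_0_iff2)
    with e2 have n: "\<alpha> i (w j) = 1" by simp
    have "G = (\<lambda>k. u i k - w j k)" unfolding G_def m n by simp
    then have "F (u i) b = F (w j) b" for b
      using fun_cong[OF FG, of b] F_diff[OF u_mem w_mem, of i j b] F_zero assms by simp
    with m n show ?thesis by auto
  qed
qed

lemma root_u_off_diag:
  assumes "i < r" "j < r" "i \<noteq> j"
  shows "\<alpha> j (u i) = - of_bool (linked i j)"
  using off_diag_cases[OF assms] assms unfolding linked_def by auto

lemma root_w_off_diag:
  assumes "i < r" "j < r" "i \<noteq> j"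
  shows "\<alpha> i (w j) = of_bool (linked i j)"
  using off_diag_cases[OF assms] assms unfolding linked_def by auto

lemma F_u_eq_F_w_if_linked:
  assumes "linked i j"
  shows "F (u i) = F (w j)"
proof -
  have "i < r" "j < r" "i \<noteq> j" "\<alpha> j (u i) = - 1" using assms unfolding linked_def by auto
  then show ?thesis using off_diag_cases[of i j] by auto
qed

lemma root_hbasis:
  assumes "i < r" "j < r"
  shows "\<alpha> j (hbasis i) = (if i = j then 2 else 0) - of_bool (linked i j) - of_bool (linked j i)"
proof -
  have "hbasis i \<in> hspace d" using r_le_d assms by (simp add: hbasis_in_hspace)
  then have "\<alpha> j (hbasis i) = \<alpha> j (u i) - \<alpha> j (w i)"
    using root_eq_if_F_eq[OF _ hspace_diff[OF u_mem w_mem] F_hbasis] assms by (simp add: lin_fun_diff)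
  moreover have "\<not> linked i i" unfolding linked_def by simp
  ultimately show ?thesis
    using root_u root_w root_u_off_diag[of i j] root_w_off_diag[of j i] assms by auto
qed

lemma partial_injection_linked: "partial_injection r linked"
  unfolding partial_injection_def
proof (intro conjI allI impI; elim conjE)
  fix i j k assume "i < r" "j < r" "k < r" "linked i j" "linked i k"
  then have "F (w j) = F (w k)" using F_u_eq_F_w_if_linked by metis
  then have "\<alpha> j (w j) = \<alpha> j (w k)" using root_eq_if_F_eq[OF w_mem w_mem] \<open>j < r\<close> \<open>k < r\<close> by blast
  show "j = k"
  proof (rule ccontr)
    assume "j \<noteq> k"
    then have "\<alpha> j (w k) = of_bool (linked j k)" using root_w_off_diag \<open>j < r\<close> \<open>k < r\<close> by blast
    with \<open>\<alpha> j (w j) = \<alpha> j (w k)\<close> root_w[OF \<open>j < r\<close>] show False by (cases "linked j k") auto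
  qed
next
  fix i j k assume "i < r" "j < r" "k < r" "linked i k" "linked j k"
  then have "F (u i) = F (u j)" using F_u_eq_F_w_if_linked by metis
  then have "\<alpha> j (u i) = \<alpha> j (u j)" using root_eq_if_F_eq[OF u_mem u_mem] \<open>i < r\<close> \<open>j < r\<close> by blast
  show "i = j"
  proof (rule ccontr)
    assume "i \<noteq> j"
    then have "\<alpha> j (u i) = - of_bool (linked i j)" using root_u_off_diag \<open>i < r\<close> \<open>j < r\<close> by blast
    with \<open>\<alpha> j (u i) = \<alpha> j (u j)\<close> root_u[OF \<open>j < r\<close>] show False by (cases "linked i j") auto
  qed
qed

lemma F_sum_hbasis_eq_0:
  assumes surj: "\<forall>j<r. \<exists>i<r. linked i j"
  shows "F (\<lambda>k. \<Sum>i<r. hbasis i k) = (\<lambda>b. 0)"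
proof
  fix b
  have "\<forall>j\<in>{..<r}. \<exists>i. i < r \<and> linked i j" using surj by simp
  then obtain \<pi> where \<pi>: "\<And>j. j < r \<Longrightarrow> \<pi> j < r \<and> linked (\<pi> j) j"
    using bchoice[of "{..<r}" "\<lambda>j i. i < r \<and> linked i j"] by auto
  have inj: "inj_on \<pi> {..<r}"
  proof (rule inj_onI)
    fix j k assume "j \<in> {..<r}" "k \<in> {..<r}" "\<pi> j = \<pi> k"
    then have "\<pi> j < r" "linked (\<pi> j) j" "linked (\<pi> j) k" using \<pi>[of j] \<pi>[of k] by auto
    then show "j = k"
      using partial_injection_linked \<open>j \<in> {..<r}\<close> \<open>k \<in> {..<r}\<close>
      unfolding partial_injection_def by blast
  qed
  then have "\<pi> ` {..<r} = {..<r}"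
    using \<pi> endo_inj_surj[of "{..<r}" \<pi>] by auto
  have "F (\<lambda>k. \<Sum>i<r. hbasis i k) b = (\<Sum>i<r. F (hbasis i) b)"
    using F_sum[of "{..<r}" hbasis b] hbasis_in_hspace r_le_d by simp
  also have "\<dots> = (\<Sum>i<r. F (u i) b) - (\<Sum>i<r. F (w i) b)"
    unfolding sum_subtractf[symmetric]
    by (rule sum.cong) (simp_all add: F_hbasis F_diff u_mem w_mem)
  also have "(\<Sum>i<r. F (w i) b) = (\<Sum>j<r. F (u (\<pi> j)) b)"
  proof (rule sum.cong)
    fix j assume "j \<in> {..<r}"
    then have "linked (\<pi> j) j" using \<pi> by simp
    then show "F (w j) b = F (u (\<pi> j)) b" by (simp add: F_u_eq_F_w_if_linked)
  qed simp
  also have "\<dots> = (\<Sum>i\<in>\<pi> ` {..<r}. F (u i) b)"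
    using sum.reindex[OF inj, of "\<lambda>i. F (u i) b"] by simp
  also have "\<dots> = (\<Sum>i<r. F (u i) b)"
    using \<open>\<pi> ` {..<r} = {..<r}\<close> by simp
  finally show "F (\<lambda>k. \<Sum>i<r. hbasis i k) b = 0" by simp
qed

lemma type_A_linked:
  assumes "\<forall>i<r. \<forall>j<r. \<alpha> j (hbasis i) = of_int (N i j)"
  shows "type_A r linked N"
  unfolding type_A_def
proof (intro conjI partial_injection_linked allI impI)
  fix i j assume "i < r" "j < r"
  then have "complex_of_int (N i j) = \<alpha> j (hbasis i)" using assms by simp
  also have "\<dots> = (if i = j then 2 else 0) - of_bool (linked i j) - of_bool (linked j i)"
    using root_hbasis \<open>i < r\<close> \<open>j < r\<close> by blast
  also have "\<dots> = of_int ((if i = j then 2 else 0) - of_bool (linked i j) - of_bool (linked j i))"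
    by (cases "i = j") simp_all
  finally show "N i j = (if i = j then 2 else 0) - of_bool (linked i j) - of_bool (linked j i)"
    by (simp only: of_int_eq_iff)
qed

lemma zero_set_subset_kernel:
  assumes "d = r + corank r N" "type_A r linked N" "indecomposable r N"
    and "trivial_kernel d r (\<lambda>l j. acoef j l)"
  shows "{H \<in> hspace d. \<forall>i<r. \<alpha> i H = 0} \<subseteq> {H \<in> hspace d. F H = (\<lambda>b. 0)}"
proof -
  have "corank r N \<le> 1" by (rule type_A_corank_le_1[OF assms(2,3)])
  then consider "corank r N = 0" | "corank r N = 1" by linarith
  then show ?thesis
  proof cases
    case 1
    then show ?thesis using zero_set_subset_kernel_if_square assms(1,4) by simp
  next
    case 2
    then have "0 < r" unfolding corank_def by simp
    let ?z = "\<lambda>k. \<Sum>i<r. hbasis i k"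
    have "?z \<in> hspace d" using hspace_sum[of "{..<r}" hbasis] hbasis_in_hspace r_le_d by auto
    moreover have "F ?z = (\<lambda>b. 0)"
      using F_sum_hbasis_eq_0 type_A_corank_neq_0_imp_surjective[OF assms(2,3)] 2 by simp
    moreover have "?z 0 \<noteq> 0" using \<open>0 < r\<close> by (simp add: hbasis_def)
    ultimately show ?thesis
      using zero_set_subset_kernel_if_line[OF _ assms(4), of ?z 0] assms(1) 2 by simp
  qed
qed

end

lemma (in weight_action) problem2_normalise:
  assumes A: "\<forall>i<r. A i \<in> hspace d" and B: "\<forall>i<r. B i \<in> hspace d"
    and simple_roots: "\<forall>i<r. \<alpha> i (hbasis i) = 2"
    and diag: "\<forall>i<r. bracket (lmult (v i) (F (A i))) (lmult (vinv i) (F (B i))) = F (hbasis i)"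
    and off_diag: "\<forall>i<r. \<forall>j<r. i \<noteq> j \<longrightarrow>
      bracket (lmult (v i) (F (A i))) (lmult (vinv j) (F (B j))) = (\<lambda>b. 0)"
  shows "normalised_solution d r acoef sc F v vinv
    (\<lambda>i k. inverse (\<alpha> i (A i)) * A i k) (\<lambda>i k. \<alpha> i (A i) * B i k)"
proof -
  have AB: "\<alpha> i (A i) * \<alpha> i (B i) = - 1"
    and F_hbasis: "F (hbasis i) = F (\<lambda>k. inverse (\<alpha> i (A i)) * A i k - \<alpha> i (A i) * B i k)"
    if "i < r" for i
    using rescale_diag_bracket[of "A i" "B i" i] A B simple_roots diag that by auto
  then have A_root: "\<alpha> i (A i) \<noteq> 0" if "i < r" for i using that by force
  show ?thesis
  proof (intro normalised_solution.intro[OF weight_action_axioms] normalised_solution_axioms.intro)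
    fix i assume "i < r"
    show "(\<lambda>k. inverse (\<alpha> i (A i)) * A i k) \<in> hspace d" "(\<lambda>k. \<alpha> i (A i) * B i k) \<in> hspace d"
      using A B \<open>i < r\<close> by (simp_all add: hspace_scale)
    show "\<alpha> i (\<lambda>k. inverse (\<alpha> i (A i)) * A i k) = 1" "\<alpha> i (\<lambda>k. \<alpha> i (A i) * B i k) = - 1"
      using A_root AB \<open>i < r\<close> by (simp_all add: lin_fun_scale)
    show "F (hbasis i) = F (\<lambda>k. inverse (\<alpha> i (A i)) * A i k - \<alpha> i (A i) * B i k)"
      using F_hbasis \<open>i < r\<close> .
  next
    fix i j assume "i < r" "j < r" "i \<noteq> j"
    then show "F (\<lambda>k. \<alpha> j (\<lambda>k. inverse (\<alpha> i (A i)) * A i k) * (\<alpha> j (A j) * B j k)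
        + \<alpha> i (\<lambda>k. \<alpha> j (A j) * B j k) * (inverse (\<alpha> i (A i)) * A i k)) = (\<lambda>b. 0)"
      using rescale_off_diag_bracket[of "A i" "B j" i j] A B off_diag A_root by simp
  qed
qed

theorem corollary3p10:
  fixes r :: nat and N :: "nat \<Rightarrow> nat \<Rightarrow> int"
    and acoef :: "nat \<Rightarrow> nat \<Rightarrow> complex"
    and sc :: "complex \<Rightarrow> 'a::comm_ring_1 \<Rightarrow> 'a"
    and F :: "(nat \<Rightarrow> complex) \<Rightarrow> 'a \<Rightarrow> 'a"
    and v vinv :: "nat \<Rightarrow> 'a"
  assumes gcm: "gen_cartan r N"
    and indec: "indecomposable r N"
    and alpha_H: "\<forall>i<r. \<forall>j<r.
        lin_fun (r + corank r N) (acoef j) (hbasis i) = of_int (N i j)"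
    and alpha_indep: "\<forall>c :: nat \<Rightarrow> complex.
        (\<forall>H\<in>hspace (r + corank r N).
            (\<Sum>j<r. c j * lin_fun (r + corank r N) (acoef j) H) = 0)
        \<longrightarrow> (\<forall>j<r. c j = 0)"
    and alg: "complex_comm_algebra sc"
    and Fhom: "lie_hom_h (r + corank r N) sc F"
    and v_inv: "\<forall>i<r. v i * vinv i = 1"
    and v_eig: "\<forall>H\<in>hspace (r + corank r N). \<forall>i<r.
        F H (v i) = sc (lin_fun (r + corank r N) (acoef i) H) (v i)"
    and problem2: "\<exists>\<delta>p \<delta>m :: nat \<Rightarrow> 'a \<Rightarrow> 'a.
        (\<forall>i<r. \<delta>p i \<in> F ` hspace (r + corank r N)
               \<and> \<delta>m i \<in> F ` hspace (r + corank r N)) \<and>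
        (\<forall>a<r + corank r N. \<forall>b<r + corank r N.
            bracket (F (hbasis a)) (F (hbasis b)) = (\<lambda>x. 0)) \<and>
        (\<forall>i<r. bracket (lmult (v i) (\<delta>p i)) (lmult (vinv i) (\<delta>m i))
               = F (hbasis i)) \<and>
        (\<forall>i<r. \<forall>j<r. i \<noteq> j \<longrightarrow>
            bracket (lmult (v i) (\<delta>p i)) (lmult (vinv j) (\<delta>m j)) = (\<lambda>x. 0)) \<and>
        (\<forall>a<r + corank r N. \<forall>j<r.
            bracket (F (hbasis a)) (lmult (v j) (\<delta>p j))
              = (\<lambda>x. sc (lin_fun (r + corank r N) (acoef j) (hbasis a))
                         (lmult (v j) (\<delta>p j) x)) \<and>
            bracket (F (hbasis a)) (lmult (vinv j) (\<delta>m j))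
              = (\<lambda>x. sc (- lin_fun (r + corank r N) (acoef j) (hbasis a))
                         (lmult (vinv j) (\<delta>m j) x)))"
  shows "{H \<in> hspace (r + corank r N). F H = (\<lambda>x. 0)}
       = {H \<in> hspace (r + corank r N). \<forall>i<r. lin_fun (r + corank r N) (acoef i) H = 0}"
proof -
  define d where "d = r + corank r N"
  interpret weight_action d r acoef sc F v vinv
    using alg Fhom v_inv v_eig unfolding d_def by unfold_locales simp_all
  obtain \<delta>p \<delta>m where \<delta>: "\<forall>i<r. \<delta>p i \<in> F ` hspace d \<and> \<delta>m i \<in> F ` hspace d"
    and diag: "\<forall>i<r. bracket (lmult (v i) (\<delta>p i)) (lmult (vinv i) (\<delta>m i)) = F (hbasis i)"
    and off_diag: "\<forall>i<r. \<forall>j<r. i \<noteq> j \<longrightarrow>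
      bracket (lmult (v i) (\<delta>p i)) (lmult (vinv j) (\<delta>m j)) = (\<lambda>x. 0)"
    using problem2 unfolding d_def[symmetric] by blast
  obtain A B where A: "\<forall>i\<in>{..<r}. A i \<in> hspace d \<and> \<delta>p i = F (A i)"
    and B: "\<forall>i\<in>{..<r}. B i \<in> hspace d \<and> \<delta>m i = F (B i)"
    using bchoice[of "{..<r}" "\<lambda>i X. X \<in> hspace d \<and> \<delta>p i = F X"]
      bchoice[of "{..<r}" "\<lambda>i X. X \<in> hspace d \<and> \<delta>m i = F X"] \<delta> by blast
  have roots: "\<forall>i<r. \<forall>j<r. \<alpha> j (hbasis i) = of_int (N i j)"
    using alpha_H unfolding d_def .
  moreover have "\<forall>i<r. N i i = 2" using gcm unfolding gen_cartan_def by blast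
  ultimately have simple_roots: "\<forall>i<r. \<alpha> i (hbasis i) = 2" by simp
  interpret normalised_solution d r acoef sc F v vinv
    "\<lambda>i k. inverse (\<alpha> i (A i)) * A i k" "\<lambda>i k. \<alpha> i (A i) * B i k"
    by (rule problem2_normalise) (use A B simple_roots diag off_diag in auto)
  have "trivial_kernel d r (\<lambda>l j. acoef j l)"
    using trivial_kernel_if_functionals_independent alpha_indep unfolding d_def by blast
  then have "{H \<in> hspace d. \<forall>i<r. \<alpha> i H = 0} \<subseteq> {H \<in> hspace d. F H = (\<lambda>b. 0)}"
    using zero_set_subset_kernel type_A_linked[OF roots] indec d_def by blast
  with kernel_subset_zero_set show ?thesis unfolding d_def by blast
qed

end
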